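(* Let $\mu$ be a finite $P$-invariant measure on $\mathbf X$ and $\tau$ a $\theta$-compatible stopping time such that $\lim_{n\to\infty}\mathbb P_x(\tau\ge n)=0$ for $\mu$-a.e. $x\in\mathbf X$. Then for every non-negative Borel function $f$ on $\mathbf X$, \[\int_{\mathbf X}f\,d\mu=\int_{\mathbf X}SRf\,d\mu.\]
   Context: $\mathbf X$ is a complete separable metric space with its Borel $\sigma$-algebra, $(X_n)$ a Markov chain on $\mathbf X$, $\mathbb P_x$ its law started at $x$, $Pf(x)=\mathbb E_xf(X_1)$; $\mu$ is $P$-invariant if $\int Pf\,d\mu=\int f\,d\mu$ for non-negative Borel $f$. $\theta$ is the shift on $\mathbf X^{\mathbb N}$. A stopping time $\tau$ is $\theta$-compatible if for all $x$, $\mathbb P_x(\tau=0)=0$ and, $\mathbb P_x$-a.s., $\tau\ge2$ implies $\tau\circ\theta=\tau-1$. For non-negative Borel $f$: $Sf(x)=\mathbb E_x[f(X_1)\mathbf 1_{\tau=1}]$, $Rf(x)=\mathbb E_x[(f(X_0)+\dots+f(X_{\tau-1}))\mathbf 1_{\tau<\infty}]$. *)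

theory Defs
  imports "HOL-Probability.Probability"
begin

abbreviation path_space :: "('a::topological_space) stream measure" where
  "path_space \<equiv> stream_space borel"

text \<open>P is the law family of the Markov chain with transition kernel K:
  under P x the chain starts at x, X_1 is distributed as K x, and given X_1 = y
  the shifted path has law P y.  This recursion determines the law uniquely.\<close>
definition markov_law ::
  "('a::topological_space \<Rightarrow> 'a measure) \<Rightarrow> ('a \<Rightarrow> 'a stream measure) \<Rightarrow> bool" where
  "markov_law K P \<longleftrightarrow>
     K \<in> measurable borel (prob_algebra borel) \<and>
     P \<in> measurable borel (prob_algebra path_space) \<and>
     (\<forall>x. P x = bind (K x) (\<lambda>y. distr (P y) path_space (\<lambda>\<omega>. x ## \<omega>)))"

definition trans_op :: "('a \<Rightarrow> 'a stream measure) \<Rightarrow> ('a \<Rightarrow> ennreal) \<Rightarrow> 'a \<Rightarrow> ennreal" where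
  "trans_op P f x = (\<integral>\<^sup>+ \<omega>. f (\<omega> !! 1) \<partial>P x)"

definition invariant_measure ::
  "('a::topological_space \<Rightarrow> 'a stream measure) \<Rightarrow> 'a measure \<Rightarrow> bool" where
  "invariant_measure P \<mu> \<longleftrightarrow>
     (\<forall>f \<in> borel_measurable borel. (\<integral>\<^sup>+ x. trans_op P f x \<partial>\<mu>) = (\<integral>\<^sup>+ x. f x \<partial>\<mu>))"

definition nat_filtration :: "nat \<Rightarrow> ('a::topological_space) stream measure" where
  "nat_filtration n = vimage_algebra (space path_space)
      (\<lambda>\<omega>. restrict (\<lambda>i. \<omega> !! i) {..n}) (PiM {..n} (\<lambda>_. borel))"

definition chain_stopping_time :: "('a::topological_space stream \<Rightarrow> enat) \<Rightarrow> bool" where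
  "chain_stopping_time \<tau> \<longleftrightarrow>
     (\<forall>n::nat. {\<omega> \<in> space path_space. \<tau> \<omega> \<le> enat n} \<in> sets (nat_filtration n))"

definition theta_compatible ::
  "('a::topological_space \<Rightarrow> 'a stream measure) \<Rightarrow> ('a stream \<Rightarrow> enat) \<Rightarrow> bool" where
  "theta_compatible P \<tau> \<longleftrightarrow>
     chain_stopping_time \<tau> \<and>
     (\<forall>x. emeasure (P x) {\<omega> \<in> space path_space. \<tau> \<omega> = 0} = 0) \<and>
     (\<forall>x. AE \<omega> in P x. \<tau> \<omega> \<ge> 2 \<longrightarrow> \<tau> (stl \<omega>) = \<tau> \<omega> - 1)"

definition S_op ::
  "('a \<Rightarrow> 'a stream measure) \<Rightarrow> ('a stream \<Rightarrow> enat) \<Rightarrow> ('a \<Rightarrow> ennreal) \<Rightarrow> 'a \<Rightarrow> ennreal" where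
  "S_op P \<tau> f x = (\<integral>\<^sup>+ \<omega>. f (\<omega> !! 1) * indicator {\<omega>. \<tau> \<omega> = 1} \<omega> \<partial>P x)"

definition R_op ::
  "('a \<Rightarrow> 'a stream measure) \<Rightarrow> ('a stream \<Rightarrow> enat) \<Rightarrow> ('a \<Rightarrow> ennreal) \<Rightarrow> 'a \<Rightarrow> ennreal" where
  "R_op P \<tau> f x = (\<integral>\<^sup>+ \<omega>. (if \<tau> \<omega> < \<infinity> then (\<Sum>i < the_enat (\<tau> \<omega>). f (\<omega> !! i)) else 0) \<partial>P x)"

end

theory Submission
  imports Defs
begin

(* Since \<tau> \<noteq> 0 almost surely, the transition operator splits as trans_op = S + N with
  N g x = E_x[g(X_1); \<tau> \<ge> 2].  Iterating the invariance of \<mu> gives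
  \<integral>g d\<mu> = \<Sum>_{m<n} \<integral>S N^m g d\<mu> + \<integral>N^n g d\<mu>.  By the Markov property and
  \<theta>-compatibility, N^n (E_. G) x = E_x[G \<circ> \<theta>^n; \<tau> > n]; for bounded g the remainder is
  therefore dominated by \<integral>P_x(\<tau> \<ge> n) d\<mu> \<rightarrow> 0, and truncation removes the boundedness.
  The same formula for N^n shows R f = \<Sum>_n N^n \<phi> with \<phi> x = f x P_x(\<tau> < \<infinity>), and
  \<phi> = f \<mu>-almost everywhere. *)

lemma enat_one_less_iff: "(1::enat) < t \<longleftrightarrow> 2 \<le> t"
  by (cases t) (auto simp: one_enat_def numeral_eq_enat)

lemma enat_neq_0_iff: "t \<noteq> (0::enat) \<longleftrightarrow> t = 1 \<or> 1 < t"
  by (cases t) (auto simp: one_enat_def zero_enat_def)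

lemma enat_Suc_less_iff: "enat (Suc m) < t \<longleftrightarrow> 1 < t \<and> enat m < t - 1"
  by (cases t) (auto simp: one_enat_def)

lemma enat_diff_Suc: "(t - 1) - enat m = t - enat (Suc m)"
  by (cases t) (auto simp: one_enat_def)

locale markov_chain =
  fixes K :: "'a::polish_space \<Rightarrow> 'a measure" and P :: "'a \<Rightarrow> 'a stream measure"
  assumes law: "markov_law K P"
begin

lemma P_measurable: "P \<in> borel \<rightarrow>\<^sub>M prob_algebra path_space"
  and K_measurable: "K \<in> borel \<rightarrow>\<^sub>M prob_algebra borel"
  and P_eq_bind_K: "P x = K x \<bind> (\<lambda>y. distr (P y) path_space (\<lambda>\<omega>. x ## \<omega>))"
  using law unfolding markov_law_def by blast+

lemma space_path_space [simp]: "space path_space = UNIV"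
  by (simp add: space_stream_space)

lemma prob_space_P: "prob_space (P x)"
  and sets_P [measurable_cong, simp]: "sets (P x) = sets path_space"
  using measurable_space[OF P_measurable, of x] by (auto simp: space_prob_algebra)

lemma space_P [simp]: "space (P x) = UNIV"
  using sets_eq_imp_space_eq[OF sets_P[of x]] by simp

lemma sets_K [measurable_cong, simp]: "sets (K x) = sets borel"
  using measurable_space[OF K_measurable, of x] by (auto simp: space_prob_algebra)

lemma measurable_nn_integral_P [measurable]:
  "G \<in> borel_measurable path_space \<Longrightarrow> (\<lambda>y. \<integral>\<^sup>+\<omega>. G \<omega> \<partial>P y) \<in> borel_measurable borel"
  by (rule measurable_compose[OF measurable_prob_algebraD[OF P_measurable]
        nn_integral_measurable_subprob_algebra])

lemma nn_integral_P_Cons: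
  assumes G [measurable]: "G \<in> borel_measurable path_space"
  shows "(\<integral>\<^sup>+\<omega>. G \<omega> \<partial>P x) = (\<integral>\<^sup>+y. (\<integral>\<^sup>+\<omega>. G (x ## \<omega>) \<partial>P y) \<partial>K x)"
proof -
  have "(\<lambda>y. distr (P y) path_space (\<lambda>\<omega>. x ## \<omega>)) \<in> borel \<rightarrow>\<^sub>M prob_algebra path_space"
    by (rule measurable_compose[OF P_measurable measurable_distr_prob_space]) measurable
  then have "(\<lambda>y. distr (P y) path_space (\<lambda>\<omega>. x ## \<omega>)) \<in> K x \<rightarrow>\<^sub>M subprob_algebra path_space"
    by (simp add: measurable_prob_algebraD cong: measurable_cong_sets)
  then have "(\<integral>\<^sup>+\<omega>. G \<omega> \<partial>P x)
      = (\<integral>\<^sup>+y. (\<integral>\<^sup>+\<omega>. G \<omega> \<partial>distr (P y) path_space (\<lambda>\<omega>. x ## \<omega>)) \<partial>K x)"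
    by (subst P_eq_bind_K) (rule nn_integral_bind[OF G])
  also have "\<dots> = (\<integral>\<^sup>+y. (\<integral>\<^sup>+\<omega>. G (x ## \<omega>) \<partial>P y) \<partial>K x)"
    by (intro nn_integral_cong nn_integral_distr) (auto cong: measurable_cong_sets)
  finally show ?thesis .
qed

lemma AE_P_Cons:
  assumes Q [measurable]: "Measurable.pred path_space Q"
    and AE_Q: "\<And>y. AE \<omega> in P y. Q (x ## \<omega>)"
  shows "AE \<omega> in P x. Q \<omega>"
proof -
  have "Measurable.pred path_space (\<lambda>\<omega>. \<not> Q \<omega>)"
    by measurable
  then have N: "{\<omega>. \<not> Q \<omega>} \<in> sets path_space"
    by (simp add: pred_def)
  then have "emeasure (P x) {\<omega>. \<not> Q \<omega>} = (\<integral>\<^sup>+\<omega>. indicator {\<omega>. \<not> Q \<omega>} \<omega> \<partial>P x)"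
    by simp
  also have "\<dots> = (\<integral>\<^sup>+y. (\<integral>\<^sup>+\<omega>. indicator {\<omega>. \<not> Q \<omega>} (x ## \<omega>) \<partial>P y) \<partial>K x)"
    by (rule nn_integral_P_Cons) measurable
  also have "\<dots> = (\<integral>\<^sup>+y. 0 \<partial>K x)"
  proof (intro nn_integral_cong)
    fix y
    show "(\<integral>\<^sup>+\<omega>. indicator {\<omega>. \<not> Q \<omega>} (x ## \<omega>) \<partial>P y) = 0"
      using AE_Q[of y] by (subst nn_integral_0_iff_AE) (auto simp: N)
  qed
  finally show ?thesis
    using N by (intro AE_I'[of "{\<omega>. \<not> Q \<omega>}"]) auto
qed

lemma AE_P_shd: "AE \<omega> in P y. shd \<omega> = y"
  by (rule AE_P_Cons) simp_all

lemma AE_P_stl: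
  assumes [measurable]: "Measurable.pred path_space Q" and AE_Q: "\<And>y. AE \<omega> in P y. Q \<omega>"
  shows "AE \<omega> in P x. Q (stl \<omega>)"
  by (rule AE_P_Cons) (simp_all add: AE_Q)

lemma nn_integral_P_eq_const:
  assumes "\<And>\<omega>. shd \<omega> = y \<Longrightarrow> F \<omega> = c"
  shows "(\<integral>\<^sup>+\<omega>. F \<omega> \<partial>P y) = c"
proof -
  have "(\<integral>\<^sup>+\<omega>. F \<omega> \<partial>P y) = (\<integral>\<^sup>+\<omega>. c \<partial>P y)"
    using AE_P_shd[of y] by (intro nn_integral_cong_AE) (auto simp: assms)
  then show ?thesis
    using prob_space.emeasure_space_1[OF prob_space_P] by simp
qed

end

locale stopped_markov_chain = markov_chain K P
  for K :: "'a::polish_space \<Rightarrow> 'a measure" and P +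
  fixes \<tau> :: "'a stream \<Rightarrow> enat"
  assumes theta_compatible: "theta_compatible P \<tau>"
begin

lemma tau_le_in_nat_filtration:
  obtains A where "A \<in> sets (PiM {..n} (\<lambda>_. borel))"
    and "{\<omega>. \<tau> \<omega> \<le> enat n} = (\<lambda>\<omega>. restrict (\<lambda>i. \<omega> !! i) {..n}) -` A"
proof -
  have "{\<omega>. \<tau> \<omega> \<le> enat n} \<in> sets (nat_filtration n)"
    using theta_compatible by (simp add: theta_compatible_def chain_stopping_time_def)
  also have "sets (nat_filtration n) = {(\<lambda>\<omega>. restrict (\<lambda>i. \<omega> !! i) {..n}) -` A \<inter> space path_space
      | A. A \<in> sets (PiM {..n} (\<lambda>_. borel))}"
    unfolding nat_filtration_def by (rule sets_vimage_algebra2) (auto simp: space_PiM)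
  finally show ?thesis
    using that by auto
qed

lemma pred_tau_le [measurable]: "Measurable.pred path_space (\<lambda>\<omega>. \<tau> \<omega> \<le> enat n)"
proof -
  obtain A where A: "A \<in> sets (PiM {..n} (\<lambda>_. borel))"
    and eq: "{\<omega>. \<tau> \<omega> \<le> enat n} = (\<lambda>\<omega>. restrict (\<lambda>i. \<omega> !! i) {..n}) -` A"
    by (rule tau_le_in_nat_filtration)
  have "(\<lambda>\<omega>::'a stream. restrict (\<lambda>i. \<omega> !! i) {..n}) \<in> path_space \<rightarrow>\<^sub>M PiM {..n} (\<lambda>_. borel)"
    by (rule measurable_restrict) simp
  from measurable_sets[OF this A] show ?thesis
    by (simp add: pred_def eq)
qed

lemma measurable_tau [measurable]: "\<tau> \<in> path_space \<rightarrow>\<^sub>M count_space UNIV"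
proof (rule measurable_count_space_eq_countable[THEN iffD2], simp, intro conjI ballI)
  fix a :: enat
  have "Measurable.pred path_space (\<lambda>\<omega>. \<tau> \<omega> = a)"
  proof (cases a)
    case (enat n)
    have "\<tau> \<omega> = a \<longleftrightarrow> \<tau> \<omega> \<le> enat n \<and> (\<forall>m<n. \<not> \<tau> \<omega> \<le> enat m)" for \<omega>
      using enat by (cases "\<tau> \<omega>") (auto simp: not_le, metis le_neq_implies_less less_not_refl)
    then show ?thesis
      by simp
  next
    case infinity
    have "\<tau> \<omega> = a \<longleftrightarrow> (\<forall>n. \<not> \<tau> \<omega> \<le> enat n)" for \<omega>
      using infinity by (cases "\<tau> \<omega>") auto
    then show ?thesis
      by simp
  qed
  then show "\<tau> -` {a} \<inter> space path_space \<in> sets path_space"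
    by (simp add: pred_def vimage_def)
qed simp

lemma pred_tau [measurable]: "Measurable.pred path_space (\<lambda>\<omega>. Q (\<tau> \<omega>))"
  by (rule measurable_compose[OF measurable_tau measurable_count_space])

lemma sets_tau [measurable]: "{\<omega>. Q (\<tau> \<omega>)} \<in> sets path_space"
  using pred_tau[of Q] by (simp add: pred_def)

lemma borel_measurable_indicator_tau [measurable]:
  "indicator {\<omega>. Q (\<tau> \<omega>)} \<in> borel_measurable path_space"
  by (rule borel_measurable_indicator) simp

lemma measurable_emeasure_P_tau [measurable]:
  "(\<lambda>x. emeasure (P x) {\<omega>. Q (\<tau> \<omega>)}) \<in> borel_measurable borel"
  by (rule measurable_compose[OF measurable_prob_algebraD[OF P_measurable]
        measurable_emeasure_subprob_algebra]) simp

lemma pred_tau_sdrop [measurable]: "Measurable.pred path_space (\<lambda>\<omega>. Q (\<tau> \<omega>) (\<tau> (sdrop m \<omega>)))"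
proof -
  have "(\<lambda>\<omega>. (\<tau> \<omega>, \<tau> (sdrop m \<omega>))) \<in> path_space \<rightarrow>\<^sub>M count_space UNIV \<Otimes>\<^sub>M count_space UNIV"
    by measurable
  then have "(\<lambda>\<omega>. (\<tau> \<omega>, \<tau> (sdrop m \<omega>))) \<in> path_space \<rightarrow>\<^sub>M count_space UNIV"
    by (simp add: pair_measure_countable)
  from measurable_compose[OF this measurable_count_space, of "\<lambda>(a, b). Q a b"] show ?thesis
    by simp
qed

lemma AE_tau_neq_0: "AE \<omega> in P x. \<tau> \<omega> \<noteq> 0"
proof -
  have "emeasure (P x) {\<omega>. \<tau> \<omega> = 0} = 0"
    using theta_compatible by (simp add: theta_compatible_def)
  moreover have "{\<omega>. \<tau> \<omega> = 0} \<in> sets path_space"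
    by measurable
  ultimately show ?thesis
    by (intro AE_I'[of "{\<omega>. \<tau> \<omega> = 0}"]) auto
qed

lemma AE_tau_stl: "AE \<omega> in P x. 1 < \<tau> \<omega> \<longrightarrow> \<tau> (stl \<omega>) = \<tau> \<omega> - 1"
  using theta_compatible by (simp add: theta_compatible_def enat_one_less_iff)

lemma AE_tau_sdrop: "AE \<omega> in P x. enat m < \<tau> \<omega> \<longrightarrow> \<tau> (sdrop m \<omega>) = \<tau> \<omega> - enat m"
proof (induction m arbitrary: x)
  case 0
  then show ?case
    by (simp add: zero_enat_def[symmetric])
next
  case (Suc m)
  have "AE \<omega> in P x. enat m < \<tau> (stl \<omega>) \<longrightarrow> \<tau> (sdrop m (stl \<omega>)) = \<tau> (stl \<omega>) - enat m"
    by (rule AE_P_stl[OF _ Suc.IH]) measurable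
  with AE_tau_stl[of x] show ?case
    by eventually_elim (auto simp: enat_Suc_less_iff enat_diff_Suc)
qed

lemma one_less_tau_Cons_iff:
  assumes "shd \<omega> = shd \<omega>'"
  shows "1 < \<tau> (x ## \<omega>) \<longleftrightarrow> 1 < \<tau> (x ## \<omega>')"
proof -
  obtain A where A: "{\<omega>. \<tau> \<omega> \<le> enat 1} = (\<lambda>\<omega>. restrict (\<lambda>i. \<omega> !! i) {..1}) -` A"
    by (rule tau_le_in_nat_filtration)
  from assms have "restrict (\<lambda>i. (x ## \<omega>) !! i) {..1::nat} = restrict (\<lambda>i. (x ## \<omega>') !! i) {..1}"
    by (auto simp: restrict_def fun_eq_iff le_Suc_eq)
  then show ?thesis
    using A[THEN eqset_imp_iff, of "x ## \<omega>"] A[THEN eqset_imp_iff, of "x ## \<omega>'"]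
    by (simp add: one_enat_def not_le[symmetric])
qed

definition N_op :: "('a \<Rightarrow> ennreal) \<Rightarrow> 'a \<Rightarrow> ennreal" where
  "N_op g x = (\<integral>\<^sup>+\<omega>. g (\<omega> !! 1) * indicator {\<omega>. 1 < \<tau> \<omega>} \<omega> \<partial>P x)"

lemma measurable_N_op [measurable]:
  assumes [measurable]: "g \<in> borel_measurable borel"
  shows "N_op g \<in> borel_measurable borel"
  unfolding N_op_def by (rule measurable_nn_integral_P) measurable

lemma measurable_N_op_funpow [measurable]:
  "g \<in> borel_measurable borel \<Longrightarrow> (N_op ^^ m) g \<in> borel_measurable borel"
  by (induction m) simp_all

lemma measurable_S_op [measurable]:
  assumes [measurable]: "g \<in> borel_measurable borel"
  shows "S_op P \<tau> g \<in> borel_measurable borel"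
  unfolding S_op_def by (rule measurable_nn_integral_P) measurable

lemma trans_op_eq_S_op_plus_N_op:
  assumes [measurable]: "g \<in> borel_measurable borel"
  shows "trans_op P g x = S_op P \<tau> g x + N_op g x"
proof -
  have "trans_op P g x = (\<integral>\<^sup>+\<omega>. g (\<omega> !! 1) * indicator {\<omega>. \<tau> \<omega> = 1} \<omega>
      + g (\<omega> !! 1) * indicator {\<omega>. 1 < \<tau> \<omega>} \<omega> \<partial>P x)"
    unfolding trans_op_def using AE_tau_neq_0[of x]
    by (intro nn_integral_cong_AE) (auto simp: indicator_def enat_neq_0_iff)
  also have "\<dots> = S_op P \<tau> g x + N_op g x"
    unfolding S_op_def N_op_def by (rule nn_integral_add) measurable
  finally show ?thesis .
qed

lemma N_op_nn_integral_P:
  assumes [measurable]: "H \<in> borel_measurable path_space"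
  shows "N_op (\<lambda>y. \<integral>\<^sup>+\<omega>. H \<omega> \<partial>P y) x = (\<integral>\<^sup>+\<omega>. indicator {\<omega>. 1 < \<tau> \<omega>} \<omega> * H (stl \<omega>) \<partial>P x)"
proof -
  \<comment> \<open>The event \<open>1 < \<tau>\<close> depends only on X_0 and X_1, so under \<open>P y\<close>, where X_0 = y almost
    surely, its indicator at \<open>x ## \<omega>\<close> is the constant \<open>c y\<close>.\<close>
  define c :: "'a \<Rightarrow> ennreal" where "c y = indicator {\<omega>. 1 < \<tau> \<omega>} (x ## sconst y)" for y
  have c_Cons: "indicator {\<omega>. 1 < \<tau> \<omega>} (x ## \<omega>) = c (shd \<omega>)" for \<omega>
    unfolding c_def by (simp add: indicator_def one_less_tau_Cons_iff[of \<omega> "sconst (shd \<omega>)"])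
  have "N_op (\<lambda>y. \<integral>\<^sup>+\<omega>. H \<omega> \<partial>P y) x
      = (\<integral>\<^sup>+y. (\<integral>\<^sup>+\<omega>. (\<integral>\<^sup>+\<omega>'. H \<omega>' \<partial>P (shd \<omega>)) * indicator {\<omega>. 1 < \<tau> \<omega>} (x ## \<omega>) \<partial>P y) \<partial>K x)"
    unfolding N_op_def by (subst nn_integral_P_Cons) simp_all
  also have "\<dots> = (\<integral>\<^sup>+y. c y * (\<integral>\<^sup>+\<omega>. H \<omega> \<partial>P y) \<partial>K x)"
    by (intro nn_integral_cong nn_integral_P_eq_const) (simp add: c_Cons mult.commute)
  also have "\<dots> = (\<integral>\<^sup>+y. (\<integral>\<^sup>+\<omega>. indicator {\<omega>. 1 < \<tau> \<omega>} (x ## \<omega>) * H \<omega> \<partial>P y) \<partial>K x)"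
  proof (intro nn_integral_cong)
    fix y
    have "c y * (\<integral>\<^sup>+\<omega>. H \<omega> \<partial>P y) = (\<integral>\<^sup>+\<omega>. c y * H \<omega> \<partial>P y)"
      by (rule nn_integral_cmult[symmetric]) simp
    also have "\<dots> = (\<integral>\<^sup>+\<omega>. indicator {\<omega>. 1 < \<tau> \<omega>} (x ## \<omega>) * H \<omega> \<partial>P y)"
      using AE_P_shd[of y] by (intro nn_integral_cong_AE) (auto simp: c_Cons)
    finally show "c y * (\<integral>\<^sup>+\<omega>. H \<omega> \<partial>P y) = \<dots>" .
  qed
  also have "\<dots> = (\<integral>\<^sup>+\<omega>. indicator {\<omega>. 1 < \<tau> \<omega>} \<omega> * H (stl \<omega>) \<partial>P x)"
    by (subst nn_integral_P_Cons) simp_all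
  finally show ?thesis .
qed

lemma N_op_funpow_nn_integral_P:
  assumes [measurable]: "G \<in> borel_measurable path_space"
  shows "(N_op ^^ m) (\<lambda>y. \<integral>\<^sup>+\<omega>. G \<omega> \<partial>P y) x
    = (\<integral>\<^sup>+\<omega>. indicator {\<omega>. enat m < \<tau> \<omega>} \<omega> * G (sdrop m \<omega>) \<partial>P x)"
proof (induction m arbitrary: x)
  case 0
  show ?case
    using AE_tau_neq_0[of x] by (auto intro!: nn_integral_cong_AE simp: indicator_def zero_enat_def[symmetric])
next
  case (Suc m)
  have "(N_op ^^ Suc m) (\<lambda>y. \<integral>\<^sup>+\<omega>. G \<omega> \<partial>P y) x
      = N_op (\<lambda>y. \<integral>\<^sup>+\<omega>. indicator {\<omega>. enat m < \<tau> \<omega>} \<omega> * G (sdrop m \<omega>) \<partial>P y) x"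
    by (simp add: Suc.IH[abs_def])
  also have "\<dots> = (\<integral>\<^sup>+\<omega>. indicator {\<omega>. 1 < \<tau> \<omega>} \<omega>
      * (indicator {\<omega>. enat m < \<tau> \<omega>} (stl \<omega>) * G (sdrop m (stl \<omega>))) \<partial>P x)"
    by (rule N_op_nn_integral_P) measurable
  also have "\<dots> = (\<integral>\<^sup>+\<omega>. indicator {\<omega>. enat (Suc m) < \<tau> \<omega>} \<omega> * G (sdrop (Suc m) \<omega>) \<partial>P x)"
    using AE_tau_stl[of x]
    by (intro nn_integral_cong_AE, eventually_elim) (auto simp: indicator_def enat_Suc_less_iff)
  finally show ?case .
qed

lemma N_op_funpow_le:
  assumes [measurable]: "g \<in> borel_measurable borel" and le_c: "\<And>y. g y \<le> c"
  shows "(N_op ^^ n) g x \<le> c * emeasure (P x) {\<omega>. enat n \<le> \<tau> \<omega>}"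
proof -
  have "g = (\<lambda>y. \<integral>\<^sup>+\<omega>. g (shd \<omega>) \<partial>P y)"
    by (intro ext nn_integral_P_eq_const[symmetric]) simp
  then have "(N_op ^^ n) g x = (\<integral>\<^sup>+\<omega>. indicator {\<omega>. enat n < \<tau> \<omega>} \<omega> * g (\<omega> !! n) \<partial>P x)"
    using N_op_funpow_nn_integral_P[of "\<lambda>\<omega>. g (shd \<omega>)" n x] by simp
  also have "\<dots> \<le> (\<integral>\<^sup>+\<omega>. c * indicator {\<omega>. enat n \<le> \<tau> \<omega>} \<omega> \<partial>P x)"
    by (intro nn_integral_mono) (auto simp: indicator_def le_c)
  also have "\<dots> = c * emeasure (P x) {\<omega>. enat n \<le> \<tau> \<omega>}"
    by (rule nn_integral_cmult_indicator) measurable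
  finally show ?thesis .
qed

lemma mono_N_op: "mono N_op"
  unfolding N_op_def by (intro monoI le_funI nn_integral_mono mult_right_mono) (auto dest: le_funD)

lemma mono_S_op: "mono (S_op P \<tau>)"
  unfolding S_op_def by (intro monoI le_funI nn_integral_mono mult_right_mono) (auto dest: le_funD)

lemma nn_integral_P_SUP_X1_indicator:
  assumes "incseq F" and [measurable]: "\<And>k. F k \<in> borel_measurable borel"
    and [measurable]: "A \<in> sets path_space"
  shows "(\<integral>\<^sup>+\<omega>. (SUP k. F k (\<omega> !! 1)) * indicator A \<omega> \<partial>P x)
    = (SUP k. \<integral>\<^sup>+\<omega>. F k (\<omega> !! 1) * indicator A \<omega> \<partial>P x)"
proof -
  have "(\<integral>\<^sup>+\<omega>. (SUP k. F k (\<omega> !! 1)) * indicator A \<omega> \<partial>P x)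
      = (\<integral>\<^sup>+\<omega>. (SUP k. F k (\<omega> !! 1) * indicator A \<omega>) \<partial>P x)"
    by (simp add: SUP_mult_right_ennreal)
  also have "\<dots> = (SUP k. \<integral>\<^sup>+\<omega>. F k (\<omega> !! 1) * indicator A \<omega> \<partial>P x)"
    using \<open>incseq F\<close>
    by (intro nn_integral_monotone_convergence_SUP incseq_SucI le_funI mult_right_mono)
      (auto simp: incseq_Suc_iff le_fun_def)
  finally show ?thesis .
qed

lemma N_op_SUP:
  assumes "incseq F" and "\<And>k. F k \<in> borel_measurable borel"
  shows "N_op (\<lambda>y. SUP k. F k y) x = (SUP k. N_op (F k) x)"
  unfolding N_op_def using assms by (rule nn_integral_P_SUP_X1_indicator) simp

lemma S_op_SUP:
  assumes "incseq F" and "\<And>k. F k \<in> borel_measurable borel"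
  shows "S_op P \<tau> (\<lambda>y. SUP k. F k y) x = (SUP k. S_op P \<tau> (F k) x)"
  unfolding S_op_def using assms by (rule nn_integral_P_SUP_X1_indicator) simp

lemma N_op_funpow_SUP:
  assumes "incseq F" and [measurable]: "\<And>k. F k \<in> borel_measurable borel"
  shows "(N_op ^^ m) (\<lambda>y. SUP k. F k y) x = (SUP k. (N_op ^^ m) (F k) x)"
proof (induction m arbitrary: x)
  case (Suc m)
  have "incseq (\<lambda>k. (N_op ^^ m) (F k))"
    using \<open>incseq F\<close> by (auto simp: incseq_def intro: funpow_mono mono_N_op)
  then show ?case
    by (simp add: Suc.IH[abs_def] N_op_SUP)
qed simp

lemma S_op_suminf:
  assumes [measurable]: "\<And>i. F i \<in> borel_measurable borel"
  shows "S_op P \<tau> (\<lambda>y. \<Sum>i. F i y) x = (\<Sum>i. S_op P \<tau> (F i) x)"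
  unfolding S_op_def by (simp add: nn_integral_suminf[symmetric])

lemma R_op_eq_suminf_N_op_funpow:
  assumes [measurable]: "f \<in> borel_measurable borel"
  shows "R_op P \<tau> f x
    = (\<Sum>i. (N_op ^^ i) (\<lambda>y. \<integral>\<^sup>+\<omega>. f (shd \<omega>) * indicator {\<omega>. \<tau> \<omega> < \<infinity>} \<omega> \<partial>P y) x)"
proof -
  let ?I = "\<lambda>i. indicator {\<omega>. enat i < \<tau> \<omega> \<and> \<tau> \<omega> < \<infinity>} :: 'a stream \<Rightarrow> ennreal"
  have "R_op P \<tau> f x = (\<integral>\<^sup>+\<omega>. (\<Sum>i. f (\<omega> !! i) * ?I i \<omega>) \<partial>P x)"
    unfolding R_op_def
  proof (intro nn_integral_cong)
    fix \<omega>
    show "(if \<tau> \<omega> < \<infinity> then \<Sum>i<the_enat (\<tau> \<omega>). f (\<omega> !! i) else 0) = (\<Sum>i. f (\<omega> !! i) * ?I i \<omega>)"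
    proof (cases "\<tau> \<omega>")
      case (enat k)
      then have "(\<Sum>i. f (\<omega> !! i) * ?I i \<omega>) = (\<Sum>i<k. f (\<omega> !! i) * ?I i \<omega>)"
        by (intro suminf_finite) auto
      with enat show ?thesis
        by simp
    qed simp
  qed
  also have "\<dots> = (\<Sum>i. \<integral>\<^sup>+\<omega>. f (\<omega> !! i) * ?I i \<omega> \<partial>P x)"
    by (rule nn_integral_suminf) measurable
  also have "\<dots> = (\<Sum>i. \<integral>\<^sup>+\<omega>. indicator {\<omega>. enat i < \<tau> \<omega>} \<omega>
      * (f (shd (sdrop i \<omega>)) * indicator {\<omega>. \<tau> \<omega> < \<infinity>} (sdrop i \<omega>)) \<partial>P x)"
  proof (intro suminf_cong nn_integral_cong_AE)
    fix i
    show "AE \<omega> in P x. f (\<omega> !! i) * ?I i \<omega> = indicator {\<omega>. enat i < \<tau> \<omega>} \<omega>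
        * (f (shd (sdrop i \<omega>)) * indicator {\<omega>. \<tau> \<omega> < \<infinity>} (sdrop i \<omega>))"
      using AE_tau_sdrop[of i x]
    proof eventually_elim
      case (elim \<omega>)
      then show ?case
        by (cases "\<tau> \<omega>") (auto simp: indicator_def)
    qed
  qed
  also have "\<dots> = (\<Sum>i. (N_op ^^ i) (\<lambda>y. \<integral>\<^sup>+\<omega>. f (shd \<omega>) * indicator {\<omega>. \<tau> \<omega> < \<infinity>} \<omega> \<partial>P y) x)"
    by (intro suminf_cong N_op_funpow_nn_integral_P[symmetric]) measurable
  finally show ?thesis .
qed

end

locale stationary_stopped_markov_chain = stopped_markov_chain K P \<tau>
  for K :: "'a::polish_space \<Rightarrow> 'a measure" and P \<tau> +
  fixes \<mu> :: "'a measure"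
  assumes sets_\<mu> [measurable_cong]: "sets \<mu> = sets borel"
    and finite_\<mu>: "finite_measure \<mu>"
    and invariant_\<mu>: "invariant_measure P \<mu>"
    and tau_ge_tendsto_0:
      "AE x in \<mu>. (\<lambda>n. measure (P x) {\<omega> \<in> space path_space. \<tau> \<omega> \<ge> enat n}) \<longlonglongrightarrow> 0"
begin

lemma AE_tau_finite: "AE x in \<mu>. AE \<omega> in P x. \<tau> \<omega> < \<infinity>"
  using tau_ge_tendsto_0
proof eventually_elim
  case (elim x)
  interpret prob_space "P x"
    by (rule prob_space_P)
  have "measure (P x) {\<omega>. \<tau> \<omega> = \<infinity>} \<le> 0"
  proof (rule LIMSEQ_le_const)
    show "(\<lambda>n. measure (P x) {\<omega>. enat n \<le> \<tau> \<omega>}) \<longlonglongrightarrow> 0"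
      using elim by simp
    show "\<exists>N. \<forall>n\<ge>N. measure (P x) {\<omega>. \<tau> \<omega> = \<infinity>} \<le> measure (P x) {\<omega>. enat n \<le> \<tau> \<omega>}"
      by (intro exI allI impI finite_measure_mono) auto
  qed
  then have "emeasure (P x) {\<omega>. \<tau> \<omega> = \<infinity>} = 0"
    by (simp add: emeasure_eq_measure measure_le_0_iff)
  then show ?case
    by (subst AE_iff_measurable[of "{\<omega>. \<tau> \<omega> = \<infinity>}"]) auto
qed

lemma AE_nn_integral_P_shd_tau_finite:
  assumes [measurable]: "f \<in> borel_measurable borel"
  shows "AE y in \<mu>. (\<integral>\<^sup>+\<omega>. f (shd \<omega>) * indicator {\<omega>. \<tau> \<omega> < \<infinity>} \<omega> \<partial>P y) = f y"
  using AE_tau_finite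
proof eventually_elim
  case (elim y)
  then have "(\<integral>\<^sup>+\<omega>. f (shd \<omega>) * indicator {\<omega>. \<tau> \<omega> < \<infinity>} \<omega> \<partial>P y) = (\<integral>\<^sup>+\<omega>. f (shd \<omega>) \<partial>P y)"
    by (intro nn_integral_cong_AE) auto
  then show ?case
    by (simp add: nn_integral_P_eq_const)
qed

lemma nn_integral_eq_sum_S_op_plus_N_op_funpow:
  assumes [measurable]: "g \<in> borel_measurable borel"
  shows "(\<integral>\<^sup>+x. g x \<partial>\<mu>)
    = (\<Sum>m<n. \<integral>\<^sup>+x. S_op P \<tau> ((N_op ^^ m) g) x \<partial>\<mu>) + (\<integral>\<^sup>+x. (N_op ^^ n) g x \<partial>\<mu>)"
proof (induction n)
  case (Suc n)
  have "(\<integral>\<^sup>+x. (N_op ^^ n) g x \<partial>\<mu>) = (\<integral>\<^sup>+x. trans_op P ((N_op ^^ n) g) x \<partial>\<mu>)"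
    using invariant_\<mu> by (simp add: invariant_measure_def)
  also have "\<dots> = (\<integral>\<^sup>+x. S_op P \<tau> ((N_op ^^ n) g) x + (N_op ^^ Suc n) g x \<partial>\<mu>)"
    by (simp add: trans_op_eq_S_op_plus_N_op)
  also have "\<dots> = (\<integral>\<^sup>+x. S_op P \<tau> ((N_op ^^ n) g) x \<partial>\<mu>) + (\<integral>\<^sup>+x. (N_op ^^ Suc n) g x \<partial>\<mu>)"
    by (rule nn_integral_add) measurable
  finally show ?case
    using Suc.IH by (simp add: add.assoc)
qed simp

lemma nn_integral_emeasure_tau_ge_tendsto_0:
  "(\<lambda>n. \<integral>\<^sup>+x. emeasure (P x) {\<omega>. enat n \<le> \<tau> \<omega>} \<partial>\<mu>) \<longlonglongrightarrow> 0"
proof -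
  define u where "u n x = emeasure (P x) {\<omega>. enat n \<le> \<tau> \<omega>}" for n x
  have u_measurable [measurable]: "u n \<in> borel_measurable borel" for n
    unfolding u_def by measurable
  have decseq_u: "decseq (\<lambda>n. u n x)" for x
    unfolding u_def by (intro decseq_SucI emeasure_mono) (auto simp: Suc_ile_eq)
  then have "decseq u"
    by (intro decseq_SucI le_funI) (simp add: decseq_Suc_iff)
  have "(\<integral>\<^sup>+x. u n x \<partial>\<mu>) \<le> (\<integral>\<^sup>+x. 1 \<partial>\<mu>)" for n
    unfolding u_def by (intro nn_integral_mono prob_space.measure_le_1[OF prob_space_P])
  also have "(\<integral>\<^sup>+x. 1 \<partial>\<mu>) < \<infinity>"
    using finite_measure.emeasure_finite[OF finite_\<mu>] by (simp add: top.not_eq_extremum)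
  finally have "(\<integral>\<^sup>+x. (INF n. u n x) \<partial>\<mu>) = (INF n. \<integral>\<^sup>+x. u n x \<partial>\<mu>)"
    using \<open>decseq u\<close> by (intro nn_integral_monotone_convergence_INF_decseq) simp_all
  moreover have "AE x in \<mu>. (INF n. u n x) = 0"
    using tau_ge_tendsto_0
  proof eventually_elim
    case (elim x)
    have "u n x = ennreal (measure (P x) {\<omega>. enat n \<le> \<tau> \<omega>})" for n
      unfolding u_def using finite_measure.emeasure_eq_measure[OF prob_space.finite_measure[OF prob_space_P]] by blast
    with elim have "(\<lambda>n. u n x) \<longlonglongrightarrow> 0"
      using tendsto_ennrealI[of _ 0] by simp
    then show ?case
      using LIMSEQ_INF[OF decseq_u] LIMSEQ_unique by blast
  qed
  then have "(\<integral>\<^sup>+x. (INF n. u n x) \<partial>\<mu>) = 0"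
    by (simp add: nn_integral_0_iff_AE)
  moreover have "decseq (\<lambda>n. \<integral>\<^sup>+x. u n x \<partial>\<mu>)"
    using decseq_u by (intro decseq_SucI nn_integral_mono) (simp add: decseq_Suc_iff)
  ultimately show ?thesis
    using LIMSEQ_INF[of "\<lambda>n. \<integral>\<^sup>+x. u n x \<partial>\<mu>"] by (simp add: u_def)
qed

lemma nn_integral_eq_suminf_S_op_N_op_funpow_bounded:
  assumes [measurable]: "g \<in> borel_measurable borel" and le_c: "\<And>y. g y \<le> c" and "c < top"
  shows "(\<integral>\<^sup>+x. g x \<partial>\<mu>) = (\<Sum>m. \<integral>\<^sup>+x. S_op P \<tau> ((N_op ^^ m) g) x \<partial>\<mu>)"
proof -
  have "(\<lambda>n. \<integral>\<^sup>+x. (N_op ^^ n) g x \<partial>\<mu>) \<longlonglongrightarrow> 0"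
  proof (rule tendsto_sandwich[of "\<lambda>_. 0" _ _ "\<lambda>n. c * \<integral>\<^sup>+x. emeasure (P x) {\<omega>. enat n \<le> \<tau> \<omega>} \<partial>\<mu>"])
    show "\<forall>\<^sub>F n in sequentially. \<integral>\<^sup>+x. (N_op ^^ n) g x \<partial>\<mu> \<le> c * \<integral>\<^sup>+x. emeasure (P x) {\<omega>. enat n \<le> \<tau> \<omega>} \<partial>\<mu>"
    proof (intro always_eventually allI)
      fix n
      have "(\<integral>\<^sup>+x. (N_op ^^ n) g x \<partial>\<mu>) \<le> (\<integral>\<^sup>+x. c * emeasure (P x) {\<omega>. enat n \<le> \<tau> \<omega>} \<partial>\<mu>)"
        by (intro nn_integral_mono N_op_funpow_le le_c) simp
      also have "\<dots> = c * \<integral>\<^sup>+x. emeasure (P x) {\<omega>. enat n \<le> \<tau> \<omega>} \<partial>\<mu>"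
        by (rule nn_integral_cmult) measurable
      finally show "(\<integral>\<^sup>+x. (N_op ^^ n) g x \<partial>\<mu>) \<le> \<dots>" .
    qed
    show "(\<lambda>n. c * \<integral>\<^sup>+x. emeasure (P x) {\<omega>. enat n \<le> \<tau> \<omega>} \<partial>\<mu>) \<longlonglongrightarrow> 0"
      using ennreal_tendsto_cmult[OF \<open>c < top\<close> nn_integral_emeasure_tau_ge_tendsto_0] by simp
  qed simp_all
  then have "(\<lambda>n. (\<Sum>m<n. \<integral>\<^sup>+x. S_op P \<tau> ((N_op ^^ m) g) x \<partial>\<mu>) + (\<integral>\<^sup>+x. (N_op ^^ n) g x \<partial>\<mu>))
      \<longlonglongrightarrow> (\<Sum>m. \<integral>\<^sup>+x. S_op P \<tau> ((N_op ^^ m) g) x \<partial>\<mu>) + 0"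
    by (intro tendsto_add summable_LIMSEQ) simp_all
  then show ?thesis
    by (simp add: nn_integral_eq_sum_S_op_plus_N_op_funpow[symmetric] LIMSEQ_const_iff)
qed

lemma nn_integral_eq_suminf_S_op_N_op_funpow:
  assumes [measurable]: "g \<in> borel_measurable borel"
  shows "(\<integral>\<^sup>+x. g x \<partial>\<mu>) = (\<Sum>m. \<integral>\<^sup>+x. S_op P \<tau> ((N_op ^^ m) g) x \<partial>\<mu>)"
proof -
  define h where "h k x = min (g x) (of_nat k)" for k x
  have h_measurable [measurable]: "h k \<in> borel_measurable borel" for k
    unfolding h_def by measurable
  have "incseq h"
    unfolding h_def by (intro incseq_SucI le_funI min.mono) simp_all
  have incseq_N_h: "incseq (\<lambda>k. (N_op ^^ m) (h k))" for m
    using \<open>incseq h\<close> by (auto simp: incseq_def intro: funpow_mono mono_N_op)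
  have incseq_S_N_h: "incseq (\<lambda>k. S_op P \<tau> ((N_op ^^ m) (h k)))" for m
    using incseq_N_h by (auto simp: incseq_def intro: monoD[OF mono_S_op])
  have g_eq_SUP: "g = (\<lambda>x. SUP k. h k x)"
    unfolding h_def using inf_SUP[of "g x" "\<lambda>k. of_nat k :: ennreal" UNIV for x]
    by (simp add: inf_min ennreal_SUP_of_nat_eq_top)
  have "(\<integral>\<^sup>+x. g x \<partial>\<mu>) = (SUP k. \<integral>\<^sup>+x. h k x \<partial>\<mu>)"
    using \<open>incseq h\<close> by (simp add: g_eq_SUP nn_integral_monotone_convergence_SUP)
  also have "\<dots> = (SUP k. \<Sum>m. \<integral>\<^sup>+x. S_op P \<tau> ((N_op ^^ m) (h k)) x \<partial>\<mu>)"
  proof (rule SUP_cong)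
    fix k
    show "(\<integral>\<^sup>+x. h k x \<partial>\<mu>) = (\<Sum>m. \<integral>\<^sup>+x. S_op P \<tau> ((N_op ^^ m) (h k)) x \<partial>\<mu>)"
      by (rule nn_integral_eq_suminf_S_op_N_op_funpow_bounded[of _ "of_nat k"])
        (simp_all add: h_def of_nat_less_top)
  qed simp
  also have "\<dots> = (\<Sum>m. SUP k. \<integral>\<^sup>+x. S_op P \<tau> ((N_op ^^ m) (h k)) x \<partial>\<mu>)"
    using incseq_S_N_h by (intro ennreal_suminf_SUP_eq[symmetric] incseq_SucI nn_integral_mono)
      (auto simp: incseq_Suc_iff le_fun_def)
  also have "\<dots> = (\<Sum>m. \<integral>\<^sup>+x. (SUP k. S_op P \<tau> ((N_op ^^ m) (h k)) x) \<partial>\<mu>)"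
    using incseq_S_N_h by (simp add: nn_integral_monotone_convergence_SUP)
  also have "\<dots> = (\<Sum>m. \<integral>\<^sup>+x. S_op P \<tau> ((N_op ^^ m) g) x \<partial>\<mu>)"
  proof (intro suminf_cong nn_integral_cong)
    fix m x
    have "(N_op ^^ m) g = (\<lambda>y. SUP k. (N_op ^^ m) (h k) y)"
      by (subst g_eq_SUP) (simp add: N_op_funpow_SUP[OF \<open>incseq h\<close>] fun_eq_iff)
    then show "(SUP k. S_op P \<tau> ((N_op ^^ m) (h k)) x) = S_op P \<tau> ((N_op ^^ m) g) x"
      by (simp add: S_op_SUP[OF incseq_N_h])
  qed
  finally show ?thesis .
qed

end

theorem mainTheorem7:
  fixes K :: "'a::polish_space \<Rightarrow> 'a measure"
    and P :: "'a \<Rightarrow> 'a stream measure"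
    and \<mu> :: "'a measure"
    and \<tau> :: "'a stream \<Rightarrow> enat"
    and f :: "'a \<Rightarrow> ennreal"
  assumes law: "markov_law K P"
    and mu_sets: "sets \<mu> = sets borel"
    and mu_finite: "finite_measure \<mu>"
    and mu_inv: "invariant_measure P \<mu>"
    and tau: "theta_compatible P \<tau>"
    and tau_fin: "AE x in \<mu>. (\<lambda>n. measure (P x) {\<omega> \<in> space path_space. \<tau> \<omega> \<ge> enat n}) \<longlonglongrightarrow> 0"
    and f_meas: "f \<in> borel_measurable borel"
  shows "(\<integral>\<^sup>+ x. f x \<partial>\<mu>) = (\<integral>\<^sup>+ x. S_op P \<tau> (R_op P \<tau> f) x \<partial>\<mu>)"
proof -
  interpret stationary_stopped_markov_chain K P \<tau> \<mu>
    by (intro stationary_stopped_markov_chain.intro stationary_stopped_markov_chain_axioms.intro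
        stopped_markov_chain.intro stopped_markov_chain_axioms.intro markov_chain.intro assms)
  note [measurable] = f_meas
  define \<phi> where "\<phi> y = (\<integral>\<^sup>+\<omega>. f (shd \<omega>) * indicator {\<omega>. \<tau> \<omega> < \<infinity>} \<omega> \<partial>P y)" for y
  have [measurable]: "\<phi> \<in> borel_measurable borel"
    unfolding \<phi>_def by measurable
  have "(\<integral>\<^sup>+ x. f x \<partial>\<mu>) = (\<integral>\<^sup>+ x. \<phi> x \<partial>\<mu>)"
    using AE_nn_integral_P_shd_tau_finite[OF f_meas] unfolding \<phi>_def
    by (intro nn_integral_cong_AE) auto
  also have "\<dots> = (\<Sum>i. \<integral>\<^sup>+x. S_op P \<tau> ((N_op ^^ i) \<phi>) x \<partial>\<mu>)"
    by (rule nn_integral_eq_suminf_S_op_N_op_funpow) measurable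
  also have "\<dots> = (\<integral>\<^sup>+ x. (\<Sum>i. S_op P \<tau> ((N_op ^^ i) \<phi>) x) \<partial>\<mu>)"
    by (rule nn_integral_suminf[symmetric]) measurable
  also have "\<dots> = (\<integral>\<^sup>+ x. S_op P \<tau> (R_op P \<tau> f) x \<partial>\<mu>)"
  proof -
    have "R_op P \<tau> f = (\<lambda>y. \<Sum>i. (N_op ^^ i) \<phi> y)"
      by (simp add: fun_eq_iff R_op_eq_suminf_N_op_funpow \<phi>_def[abs_def])
    then show ?thesis
      by (simp add: S_op_suminf)
  qed
  finally show ?thesis .
qed

end
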